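(* Let $\alpha=[a_0;a_1,\dots,a_r,\overline{b_1,\dots,b_s}]\in\widehat K$ with $r\ge1$, $s\ge1$, $a_0\in R$ and $a_1,\dots,a_r,b_1,\dots,b_s$ nonconstant polynomials in $R$, and let $\alpha^\sigma$ be its Galois conjugate over $K$. If $a_r\ne b_s$, then $h(\alpha)=|\alpha-\alpha^\sigma|^{-1}=q^{\,2\left(\sum_{i=1}^r\deg a_i\right)-\deg a_r-\deg b_s+\deg(a_r-b_s)}.$
   Context: $q$ is a positive power of a prime, $R=\mathbb F_q[Y]$, $K=\mathbb F_q(Y)$, $\widehat K=\mathbb F_q((Y^{-1}))$ with absolute value $|P/Q|=q^{\deg P-\deg Q}$ extended to $\widehat K$. $[a_0;a_1,a_2,\dots]$ denotes the continued fraction $a_0+1/(a_1+1/(a_2+\cdots))$ and an overline indicates a block repeated infinitely often. Such an eventually periodic expansion represents a quadratic power series over $K$. *)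

theory Defs
  imports Complex_Main "HOL-Library.Cardinality" "HOL-Computational_Algebra.Polynomial" "HOL-Computational_Algebra.Formal_Laurent_Series"
begin

text \<open>The field F_q is modelled by a finite field type 'a, q = CARD('a).
  The completion F_q((Y^-1)) is modelled by Laurent series 'a fls in the variable
  X = Y^-1; thus Y corresponds to fls_X_inv.\<close>

definition emb :: "'a::field poly \<Rightarrow> 'a fls" where
  "emb p = poly (map_poly fls_const p) fls_X_inv"

text \<open>Absolute value |f| = q^(-v(f)), where v is the X-adic (i.e. Y^-1-adic) valuation;
  for f = emb P this is q^(deg P).\<close>

definition fls_absv :: "'a::{field,finite} fls \<Rightarrow> real" where
  "fls_absv f = (if f = 0 then 0 else real CARD('a) powr (- real_of_int (fls_subdegree f)))"

fun cf_list :: "'a::field fls list \<Rightarrow> 'a fls" where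
  "cf_list [] = 0"
| "cf_list [c] = c"
| "cf_list (c # cs) = c + inverse (cf_list cs)"

definition cf_convergent :: "(nat \<Rightarrow> 'a::field poly) \<Rightarrow> nat \<Rightarrow> 'a fls" where
  "cf_convergent c n = cf_list (map (\<lambda>i. emb (c i)) [0..<Suc n])"

text \<open>Partial quotients of [a0; a1, ..., ar, overline(b1, ..., bs)].\<close>

definition eperiodic_pq :: "(nat \<Rightarrow> 'a poly) \<Rightarrow> nat \<Rightarrow> (nat \<Rightarrow> 'a poly) \<Rightarrow> nat \<Rightarrow> nat \<Rightarrow> 'a poly" where
  "eperiodic_pq a r b s n = (if n \<le> r then a n else b ((n - r - 1) mod s + 1))"

definition galois_conj :: "'a::field fls \<Rightarrow> 'a fls" where
  "galois_conj \<alpha> = (SOME \<beta>. \<exists>A B C. A \<noteq> 0 \<and> \<alpha> \<notin> {emb P / emb Q | P Q. Q \<noteq> 0} \<and>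
      emb A * \<alpha>\<^sup>2 + emb B * \<alpha> + emb C = 0 \<and> \<beta> = - emb B / emb A - \<alpha>)"

end

theory Submission
  imports Defs
begin

text \<open>
  Write \<open>v = fls_subdegree\<close>, so \<open>|x| = q\<^bsup>-v x\<^esup>\<close>. Let \<open>\<theta> m\<close> be the complete quotients of
  \<open>\<alpha>\<close>, so \<open>\<theta> m = c m + 1/\<theta> (m+1)\<close> and \<open>v (\<theta> m) = -deg (c m)\<close> for \<open>m \<ge> 1\<close>. They are
  irrational, since the expansion of a rational function terminates, so each has a unique conjugate
  \<open>\<theta>' m\<close>, and conjugation commutes with \<open>x \<mapsto> c m + 1/x\<close>. Hence
  \<open>\<theta> m - \<theta>' m = -(\<theta> (m+1) - \<theta>' (m+1)) / (\<theta> (m+1) \<theta>' (m+1))\<close>, and \<open>v (\<alpha> - \<alpha>')\<close> telescopes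
  into \<open>v (\<theta> (r+1) - \<theta>' (r+1))\<close> minus the valuations of \<open>\<theta> j, \<theta>' j\<close> for \<open>1 \<le> j \<le> r+1\<close>.

  The tail \<open>\<theta> (r+1)\<close> is purely periodic. One period gives a Moebius relation with polynomial
  coefficients, and Vieta's product formula shows \<open>|\<theta>' (r+1)| < 1\<close>. This persists around the
  period, so \<open>1/\<theta>' (r+1) = \<theta>' (r+s) - b s\<close> with \<open>|\<theta>' (r+s)| < 1\<close>. Hence
  \<open>\<theta>' r = (a r - b s) + \<theta>' (r+s)\<close> has valuation \<open>-deg (a r - b s) \<le> 0\<close>, and going down,
  \<open>v (\<theta>' j) = -deg (a j)\<close> for \<open>1 \<le> j < r\<close>. Adding up the valuations gives the exponent.
\<close>

lemma emb_pCons: "emb (pCons c p) = fls_const c + fls_X_inv * emb (p::'a::field poly)"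
  by (simp add: emb_def map_poly_pCons)

lemma fls_nth_emb: "fls_nth (emb (p::'a::field poly)) k = (if k \<le> 0 then coeff p (nat (-k)) else 0)"
proof (induction p arbitrary: k)
  case (pCons c p)
  show ?case
    using pCons.IH[of "k+1"]
    by (auto simp: emb_pCons fls_X_inv_times_conv_shift coeff_pCons nat_add_distrib
             split: nat.splits intro!: arg_cong[where f="coeff p"])
qed (simp add: emb_def)

lemma emb_0 [simp]: "emb 0 = (0::'a::field fls)"
  by (simp add: emb_def)

lemma emb_1 [simp]: "emb 1 = (1::'a::field fls)"
  by (simp add: emb_def)

lemma emb_add: "emb (p + q) = emb p + emb (q::'a::field poly)"
  by (rule fls_eqI) (simp add: fls_nth_emb)

lemma emb_minus: "emb (- p) = - emb (p::'a::field poly)"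
  by (rule fls_eqI) (simp add: fls_nth_emb)

lemma emb_diff: "emb (p - q) = emb p - emb (q::'a::field poly)"
  by (rule fls_eqI) (simp add: fls_nth_emb)

lemma emb_smult: "emb (smult c p) = fls_const c * emb (p::'a::field poly)"
  by (rule fls_eqI) (simp add: fls_nth_emb)

lemma emb_mult: "emb (p * q) = emb p * emb (q::'a::field poly)"
proof (induction p)
  case (pCons c p)
  have "emb (pCons c p * q) = emb (smult c q + pCons 0 (p * q))" by simp
  also have "\<dots> = emb (pCons c p) * emb q"
    by (simp add: emb_add emb_smult emb_pCons pCons.IH algebra_simps)
  finally show ?case .
qed simp

lemmas emb_simps = emb_add emb_minus emb_diff emb_mult

lemma emb_eq_0_iff [simp]: "emb (p::'a::field poly) = 0 \<longleftrightarrow> p = 0"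
proof
  assume "emb p = 0"
  then have "fls_nth (emb p) (- int k) = 0" for k by simp
  then show "p = 0" by (simp add: poly_eq_iff fls_nth_emb)
qed simp

lemma fls_subdegree_emb [simp]: "fls_subdegree (emb (p::'a::field poly)) = - int (degree p)"
  by (cases "p = 0") (auto intro!: fls_subdegree_eqI simp: fls_nth_emb coeff_eq_0)

lemma fls_add_dominant:
  fixes f g :: "'a::field fls"
  assumes "f \<noteq> 0" "fls_subdegree f < fls_subdegree g"
  shows "f + g \<noteq> 0" "fls_subdegree (f + g) = fls_subdegree f"
proof -
  show "fls_subdegree (f + g) = fls_subdegree f" by (rule fls_subdegree_add_eq1[OF assms])
  show "f + g \<noteq> 0"
  proof
    assume "f + g = 0"
    then have "g = - f" by (simp add: add_eq_0_iff2)
    then show False using assms(2) by simp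
  qed
qed

lemma emb_add_small:
  fixes p :: "'a::field poly"
  assumes "p \<noteq> 0" "- int (degree p) < fls_subdegree g"
  shows "emb p + g \<noteq> 0" "fls_subdegree (emb p + g) = - int (degree p)"
  using fls_add_dominant[of "emb p" g] assms by simp_all

text \<open>The disjunct \<open>X n = L\<close> is needed because \<open>fls_subdegree 0 = 0\<close>.\<close>

lemma LIMSEQ_fls_iff:
  fixes X :: "nat \<Rightarrow> 'a::field fls"
  shows "X \<longlonglongrightarrow> L \<longleftrightarrow>
    (\<forall>K. eventually (\<lambda>n. X n = L \<or> K < fls_subdegree (X n - L)) sequentially)"
proof -
  have dist_eq: "dist x y = 2 powr (- real_of_int (fls_subdegree (x - y)))"
    if "x \<noteq> y" for x y :: "'a fls"
    using that by (auto simp: dist_fls_def powr_real_of_int powr_minus)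
  have small_iff: "dist x L < 2 powr (- real_of_int K) \<longleftrightarrow> x = L \<or> K < fls_subdegree (x - L)"
    for x K by (cases "x = L") (simp_all add: dist_eq)
  show ?thesis
  proof
    assume "X \<longlonglongrightarrow> L"
    then show "\<forall>K. eventually (\<lambda>n. X n = L \<or> K < fls_subdegree (X n - L)) sequentially"
      by (auto simp flip: small_iff intro: tendstoD)
  next
    assume close: "\<forall>K. eventually (\<lambda>n. X n = L \<or> K < fls_subdegree (X n - L)) sequentially"
    show "X \<longlonglongrightarrow> L"
    proof (rule tendstoI)
      fix e :: real assume "e > 0"
      then obtain K :: nat where "(1/2::real) ^ K < e"
        using real_arch_pow_inv[of e "1/2"] by auto
      then have "2 powr (- real_of_int (int K)) < e"
        by (simp add: powr_minus powr_realpow power_one_over inverse_eq_divide)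
      then have "dist x L < e" if "x = L \<or> int K < fls_subdegree (x - L)" for x
        using that small_iff[of x "int K"] by linarith
      then show "eventually (\<lambda>n. dist (X n) L < e) sequentially"
        by (rule eventually_mono[OF close[rule_format, of "int K"]])
    qed
  qed
qed

lemma LIMSEQ_fls_diff_const:
  fixes X :: "nat \<Rightarrow> 'a::field fls"
  shows "X \<longlonglongrightarrow> L \<Longrightarrow> (\<lambda>n. X n - c) \<longlonglongrightarrow> L - c"
  by (simp add: LIMSEQ_fls_iff)

lemma LIMSEQ_fls_subdegree:
  fixes X :: "nat \<Rightarrow> 'a::field fls"
  assumes "X \<longlonglongrightarrow> L" and "eventually (\<lambda>n. X n \<noteq> 0 \<and> fls_subdegree (X n) = k) sequentially"
  shows "L \<noteq> 0" "fls_subdegree L = k"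
proof -
  have "eventually (\<lambda>n. (X n = L \<or> k < fls_subdegree (X n - L)) \<and> X n \<noteq> 0 \<and> fls_subdegree (X n) = k)
      sequentially"
    using assms LIMSEQ_fls_iff eventually_conj by blast
  then obtain x where x: "x = L \<or> k < fls_subdegree (x - L)" "x \<noteq> 0" "fls_subdegree x = k"
    using eventually_happens'[OF sequentially_bot] by blast
  have "L \<noteq> 0 \<and> fls_subdegree L = k"
  proof (cases "x = L")
    case False
    then show ?thesis
      using fls_add_dominant[of x "L - x"] x by (simp add: fls_subdegree_minus_sym)
  qed (use x in simp)
  then show "L \<noteq> 0" "fls_subdegree L = k" by simp_all
qed

lemma LIMSEQ_fls_inverse:
  fixes X :: "nat \<Rightarrow> 'a::field fls"
  assumes lim: "X \<longlonglongrightarrow> L" and "L \<noteq> 0"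
  shows "(\<lambda>n. inverse (X n)) \<longlonglongrightarrow> inverse L"
  unfolding LIMSEQ_fls_iff
proof
  fix K :: int
  let ?k = "fls_subdegree L"
  have "eventually (\<lambda>n. X n = L \<or> max ?k (K + 2 * ?k) < fls_subdegree (X n - L)) sequentially"
    using lim unfolding LIMSEQ_fls_iff by blast
  then show "eventually (\<lambda>n. inverse (X n) = inverse L \<or>
      K < fls_subdegree (inverse (X n) - inverse L)) sequentially"
  proof eventually_elim
    case (elim n)
    show ?case
    proof (cases "X n = L")
      case False
      then have close: "?k < fls_subdegree (X n - L)" "K + 2 * ?k < fls_subdegree (X n - L)"
        using elim by auto
      have "X n = L + (X n - L)" by simp
      then have "X n \<noteq> 0" "fls_subdegree (X n) = ?k"
        using fls_add_dominant[OF \<open>L \<noteq> 0\<close> close(1)] by simp_all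
      moreover have "inverse (X n) - inverse L = - ((X n - L) * (inverse (X n) * inverse L))"
        using inverse_diff_inverse[OF \<open>X n \<noteq> 0\<close> \<open>L \<noteq> 0\<close>] by (simp add: ac_simps)
      ultimately show ?thesis
        using close False \<open>L \<noteq> 0\<close> by simp
    qed simp
  qed
qed

definition rational_fls :: "'a::field fls set" where
  "rational_fls = {emb P / emb Q | P Q. Q \<noteq> 0}"

text \<open>Vieta form: \<open>x\<close> and \<open>y\<close> are the two roots of \<open>A T\<^sup>2 + B T + D\<close> for polynomials \<open>A \<noteq> 0, B, D\<close>.\<close>

definition quadratic_pair :: "'a::field fls \<Rightarrow> 'a fls \<Rightarrow> bool" where
  "quadratic_pair x y \<longleftrightarrow> (\<exists>A B D. A \<noteq> 0 \<and> emb B = - emb A * (x + y) \<and> emb D = emb A * x * y)"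

definition quadratic :: "'a::field fls \<Rightarrow> bool" where
  "quadratic x \<longleftrightarrow> (\<exists>y. quadratic_pair x y)"

lemma emb_in_rational_fls: "emb P \<in> rational_fls"
  unfolding rational_fls_def by (rule CollectI, rule exI[of _ P], rule exI[of _ 1]) simp

lemma quadratic_pair_add_emb:
  assumes "quadratic_pair x y"
  shows "quadratic_pair (x + emb C) (y + emb C)"
proof -
  obtain A B D where "A \<noteq> 0" and B: "emb B = - emb A * (x + y)" and D: "emb D = emb A * x * y"
    using assms unfolding quadratic_pair_def by blast
  moreover have "emb (B - A * C - A * C) = - emb A * ((x + emb C) + (y + emb C))"
    unfolding emb_simps B by (simp add: algebra_simps)
  moreover have "emb (D - B * C + A * C * C) = emb A * (x + emb C) * (y + emb C)"
    unfolding emb_simps B D by (simp add: algebra_simps)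
  ultimately show ?thesis unfolding quadratic_pair_def by blast
qed

lemma quadratic_pair_inverse:
  assumes "quadratic_pair x y" "x \<noteq> 0" "y \<noteq> 0"
  shows "quadratic_pair (inverse x) (inverse y)"
proof -
  obtain A B D where "A \<noteq> 0" and B: "emb B = - emb A * (x + y)" and D: "emb D = emb A * x * y"
    using assms unfolding quadratic_pair_def by blast
  with assms have "D \<noteq> 0"
    by (metis emb_eq_0_iff no_zero_divisors)
  moreover have "emb B = - emb D * (inverse x + inverse y)"
    using assms by (simp add: B D field_simps)
  moreover have "emb A = emb D * inverse x * inverse y"
    using assms by (simp add: D field_simps)
  ultimately show ?thesis unfolding quadratic_pair_def by blast
qed

lemma quadratic_pair_other_root:
  assumes "A \<noteq> 0" "emb A * x\<^sup>2 + emb B * x + emb D = 0"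
  shows "quadratic_pair x (- emb B / emb A - x)"
proof -
  have "emb D = - (emb A * x\<^sup>2 + emb B * x)"
    using minus_unique[OF assms(2)] by (rule sym)
  also have "\<dots> = emb A * x * (- emb B / emb A - x)"
    using assms(1) by (simp add: field_simps power2_eq_square)
  finally have "emb D = emb A * x * (- emb B / emb A - x)" .
  moreover have "emb B = - emb A * (x + (- emb B / emb A - x))"
    using assms by simp
  ultimately show ?thesis using assms unfolding quadratic_pair_def by blast
qed

lemma quadratic_pair_commute: "quadratic_pair x y \<Longrightarrow> quadratic_pair y x"
  unfolding quadratic_pair_def by (simp add: ac_simps)

lemma quadratic_pair_root:
  assumes "quadratic_pair x y"
  obtains A B D where "A \<noteq> 0" "emb A * x\<^sup>2 + emb B * x + emb D = 0" "y = - emb B / emb A - x"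
proof -
  obtain A B D where "A \<noteq> 0" and B: "emb B = - emb A * (x + y)" and D: "emb D = emb A * x * y"
    using assms unfolding quadratic_pair_def by blast
  moreover have "emb A * x\<^sup>2 + emb B * x + emb D = 0"
    by (simp add: B D algebra_simps power2_eq_square)
  moreover have "y = - emb B / emb A - x"
    using \<open>A \<noteq> 0\<close> by (simp add: B)
  ultimately show thesis using that by blast
qed

lemma quadratic_pair_irrational:
  assumes "quadratic_pair x y" "x \<notin> rational_fls"
  shows "y \<notin> rational_fls"
proof
  assume "y \<in> rational_fls"
  then obtain P Q where "Q \<noteq> 0" and y: "y = emb P / emb Q"
    unfolding rational_fls_def by blast
  obtain A B D where "A \<noteq> 0" and x: "x = - emb B / emb A - y"
    using quadratic_pair_root[OF quadratic_pair_commute[OF assms(1)]] by blast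
  have "emb (- B * Q - A * P) / emb (A * Q) = - emb B / emb A - emb P / emb Q"
    using \<open>A \<noteq> 0\<close> \<open>Q \<noteq> 0\<close> by (simp add: emb_simps field_simps)
  then have "x = emb (- B * Q - A * P) / emb (A * Q)"
    by (simp add: x y)
  moreover have "A * Q \<noteq> 0" using \<open>A \<noteq> 0\<close> \<open>Q \<noteq> 0\<close> by simp
  ultimately show False
    using assms(2) unfolding rational_fls_def by blast
qed

lemma quadratic_pair_unique:
  assumes irrational: "x \<notin> rational_fls" and "quadratic_pair x y" "quadratic_pair x z"
  shows "y = z"
proof -
  obtain A1 B1 D1 where A1: "A1 \<noteq> 0" and B1: "emb B1 = - emb A1 * (x + y)"
    and D1: "emb D1 = emb A1 * x * y"
    using assms(2) unfolding quadratic_pair_def by blast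
  obtain A2 B2 D2 where A2: "A2 \<noteq> 0" and B2: "emb B2 = - emb A2 * (x + z)"
    and D2: "emb D2 = emb A2 * x * z"
    using assms(3) unfolding quadratic_pair_def by blast
  \<comment> \<open>eliminating \<open>x\<^sup>2\<close> between the two equations leaves a linear one, which must be trivial\<close>
  let ?W = "A2 * B1 - A1 * B2" and ?Z = "A2 * D1 - A1 * D2"
  have linear: "emb ?W * x + emb ?Z = 0"
    by (simp add: emb_simps B1 B2 D1 D2 algebra_simps)
  have "?W = 0"
  proof (rule ccontr)
    assume "?W \<noteq> 0"
    with linear have "x = - emb ?Z / emb ?W"
      by (simp add: field_simps eq_neg_iff_add_eq_0)
    then have "x = emb (- ?Z) / emb ?W"
      by (simp only: emb_minus)
    with \<open>?W \<noteq> 0\<close> irrational show False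
      unfolding rational_fls_def by blast
  qed
  then have "emb A2 * emb B1 - emb A1 * emb B2 = 0"
    by (metis emb_0 emb_diff emb_mult)
  then have "emb A1 * emb A2 * (z - y) = 0"
    unfolding B1 B2 by (simp add: algebra_simps)
  then show ?thesis using A1 A2 by simp
qed

lemma galois_conj_eqI:
  assumes irrational: "x \<notin> rational_fls" and pair: "quadratic_pair x y"
  shows "galois_conj x = y"
  unfolding galois_conj_def
proof (rule some_equality)
  obtain A B D where "A \<noteq> 0" "emb A * x\<^sup>2 + emb B * x + emb D = 0" "y = - emb B / emb A - x"
    using quadratic_pair_root[OF pair] .
  then show "\<exists>A B C. A \<noteq> 0 \<and> x \<notin> {emb P / emb Q | P Q. Q \<noteq> 0} \<and>
      emb A * x\<^sup>2 + emb B * x + emb C = 0 \<and> y = - emb B / emb A - x"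
    using irrational unfolding rational_fls_def by blast
next
  fix z
  assume "\<exists>A B C. A \<noteq> 0 \<and> x \<notin> {emb P / emb Q | P Q. Q \<noteq> 0} \<and>
      emb A * x\<^sup>2 + emb B * x + emb C = 0 \<and> z = - emb B / emb A - x"
  then have "quadratic_pair x z"
    using quadratic_pair_other_root by blast
  then show "z = y"
    using quadratic_pair_unique[OF irrational _ pair] by blast
qed

definition cf_segment :: "(nat \<Rightarrow> 'a::field poly) \<Rightarrow> nat \<Rightarrow> nat \<Rightarrow> 'a fls" where
  "cf_segment c m n = cf_list (map (\<lambda>i. emb (c i)) [m..<Suc n])"

lemma cf_convergent_eq_segment: "cf_convergent c = cf_segment c 0"
  by (simp add: fun_eq_iff cf_convergent_def cf_segment_def)

lemma cf_segment_same [simp]: "cf_segment c n n = emb (c n)"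
  by (simp add: cf_segment_def)

lemma cf_segment_less:
  assumes "m < n"
  shows "cf_segment c m n = emb (c m) + inverse (cf_segment c (Suc m) n)"
proof -
  have "[m..<Suc n] = m # [Suc m..<Suc n]" "[Suc m..<Suc n] = Suc m # [Suc (Suc m)..<Suc n]"
    using assms by (simp_all add: upt_conv_Cons)
  then show ?thesis by (simp add: cf_segment_def)
qed

lemma cf_segment_shift:
  assumes "\<And>i. m \<le> i \<Longrightarrow> c (i + s) = c i"
  shows "cf_segment c (m + s) (n + s) = cf_segment c m n"
proof -
  have "[m + s..<Suc n + s] = map (\<lambda>i. i + s) [m..<Suc n]"
    by (induction n) auto
  then have "map (\<lambda>i. emb (c i)) [m + s..<Suc (n + s)] = map (\<lambda>i. emb (c (i + s))) [m..<Suc n]"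
    by simp
  also have "\<dots> = map (\<lambda>i. emb (c i)) [m..<Suc n]"
    using assms by (intro map_cong) auto
  finally show ?thesis by (simp add: cf_segment_def)
qed

primrec complete_quotient :: "(nat \<Rightarrow> 'a::field poly) \<Rightarrow> 'a fls \<Rightarrow> nat \<Rightarrow> 'a fls" where
  "complete_quotient c x 0 = x"
| "complete_quotient c x (Suc m) = inverse (complete_quotient c x m - emb (c m))"

text \<open>Kept out of the simpset: it would also unfold the argument of
  \<open>galois_conj (complete_quotient c x (Suc m))\<close>, whose recurrence is a different one.\<close>

declare complete_quotient.simps(2) [simp del]

lemma complete_quotient_unfold:
  "complete_quotient c x m = emb (c m) + inverse (complete_quotient c x (Suc m))"
  by (simp add: complete_quotient.simps)

locale cf_expansion =
  fixes c :: "nat \<Rightarrow> 'a::field poly" and \<alpha> :: "'a fls"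
  assumes degree_c: "\<And>m. 1 \<le> m \<Longrightarrow> 1 \<le> degree (c m)"
    and convergent: "cf_convergent c \<longlonglongrightarrow> \<alpha>"
begin

abbreviation \<theta> :: "nat \<Rightarrow> 'a fls" where
  "\<theta> \<equiv> complete_quotient c \<alpha>"

lemma c_nonzero: "1 \<le> m \<Longrightarrow> c m \<noteq> 0"
  using degree_c by force

lemma \<theta>_Suc: "\<theta> (Suc m) = inverse (\<theta> m - emb (c m))"
  by (rule complete_quotient.simps(2))

lemma cf_segment_subdegree:
  assumes "1 \<le> m" "m \<le> n"
  shows "cf_segment c m n \<noteq> 0 \<and> fls_subdegree (cf_segment c m n) = - int (degree (c m))"
  using assms(2,1)
proof (induction m rule: inc_induct)
  case (step m)
  have "- int (degree (c m)) < fls_subdegree (inverse (cf_segment c (Suc m) n))"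
    using step.IH degree_c[of m] \<open>1 \<le> m\<close> by simp
  then show ?case
    using emb_add_small[OF c_nonzero] step by (simp add: cf_segment_less)
qed (use c_nonzero in simp)

lemma cf_segment_tendsto:
  "(\<lambda>n. cf_segment c m n) \<longlonglongrightarrow> \<theta> m \<and>
    (1 \<le> m \<longrightarrow> \<theta> m \<noteq> 0 \<and> fls_subdegree (\<theta> m) = - int (degree (c m)))"
proof (induction m)
  case 0
  then show ?case using convergent by (simp add: cf_convergent_eq_segment)
next
  case (Suc m)
  let ?Y = "\<lambda>n. cf_segment c m n - emb (c m)"
  have lim: "?Y \<longlonglongrightarrow> \<theta> m - emb (c m)"
    using Suc.IH LIMSEQ_fls_diff_const by blast
  have Y_eq: "?Y n = inverse (cf_segment c (Suc m) n)" if "Suc m \<le> n" for n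
    using that by (simp add: cf_segment_less)
  have "eventually (\<lambda>n. ?Y n \<noteq> 0 \<and> fls_subdegree (?Y n) = int (degree (c (Suc m)))) sequentially"
    unfolding eventually_sequentially
  proof (intro exI allI impI)
    fix n assume "Suc m \<le> n"
    then show "?Y n \<noteq> 0 \<and> fls_subdegree (?Y n) = int (degree (c (Suc m)))"
      using Y_eq cf_segment_subdegree[of "Suc m" n] by simp
  qed
  then have "\<theta> m - emb (c m) \<noteq> 0" "fls_subdegree (\<theta> m - emb (c m)) = int (degree (c (Suc m)))"
    using LIMSEQ_fls_subdegree[OF lim] by blast+
  moreover have "(\<lambda>n. inverse (?Y n)) \<longlonglongrightarrow> \<theta> (Suc m)"
    using LIMSEQ_fls_inverse[OF lim] calculation by (simp add: \<theta>_Suc)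
  then have "(\<lambda>n. cf_segment c (Suc m) n) \<longlonglongrightarrow> \<theta> (Suc m)"
    by (rule Lim_transform_eventually)
      (use Y_eq in \<open>auto simp: eventually_sequentially intro!: exI[of _ "Suc m"]\<close>)
  ultimately show ?case by (simp add: \<theta>_Suc)
qed

lemma \<theta>_nonzero: "1 \<le> m \<Longrightarrow> \<theta> m \<noteq> 0"
  using cf_segment_tendsto by blast

lemma \<theta>_subdegree: "1 \<le> m \<Longrightarrow> fls_subdegree (\<theta> m) = - int (degree (c m))"
  using cf_segment_tendsto by blast

lemma \<theta>_neq_c: "\<theta> m \<noteq> emb (c m)"
  using \<theta>_nonzero[of "Suc m"] by (auto simp: \<theta>_Suc)

lemma \<theta>_periodic:
  assumes "\<And>i. k \<le> i \<Longrightarrow> c (i + s) = c i"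
  shows "\<theta> (k + s) = \<theta> k"
proof -
  have "(\<lambda>n. cf_segment c (k + s) (n + s)) \<longlonglongrightarrow> \<theta> (k + s)"
    using cf_segment_tendsto LIMSEQ_ignore_initial_segment by blast
  then have "(\<lambda>n. cf_segment c k n) \<longlonglongrightarrow> \<theta> (k + s)"
    by (simp add: cf_segment_shift assms)
  then show ?thesis
    using cf_segment_tendsto LIMSEQ_unique by blast
qed

lemma \<theta>_rational_descent:
  assumes "\<theta> j = emb U / emb V" "V \<noteq> 0"
  obtains V' where "V' \<noteq> 0" "degree V' < degree V" "\<theta> (Suc j) = emb V / emb V'"
proof -
  let ?V' = "U - c j * V"
  have "\<theta> j - emb (c j) = emb ?V' / emb V"
    using assms by (simp add: emb_simps field_simps)
  then have quot: "\<theta> (Suc j) = emb V / emb ?V'" by (simp add: \<theta>_Suc)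
  with \<theta>_nonzero[of "Suc j"] have "?V' \<noteq> 0" by auto
  with quot \<theta>_subdegree[of "Suc j"] degree_c[of "Suc j"] assms(2)
  have "degree ?V' < degree V" by (simp add: fls_divide_subdegree)
  with \<open>?V' \<noteq> 0\<close> quot show thesis using that by blast
qed

lemma \<theta>_irrational: "\<theta> m \<notin> rational_fls"
proof -
  have "\<theta> j \<noteq> emb U / emb V" if "V \<noteq> 0" for j U V
    using that
  proof (induction "degree V" arbitrary: j U V rule: less_induct)
    case less
    show ?case
    proof
      assume "\<theta> j = emb U / emb V"
      then obtain V' where "V' \<noteq> 0" "degree V' < degree V" "\<theta> (Suc j) = emb V / emb V'"
        using \<theta>_rational_descent less.prems by blast
      with less.hyps show False by blast
    qed
  qed
  then show ?thesis unfolding rational_fls_def by blast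
qed

lemma quadratic_pair_\<theta>_Suc:
  assumes "quadratic_pair (\<theta> j) y"
  shows "quadratic_pair (\<theta> (Suc j)) (inverse (y - emb (c j)))"
proof -
  have pair: "quadratic_pair (\<theta> j - emb (c j)) (y - emb (c j))"
    using quadratic_pair_add_emb[OF assms, of "- c j"] by (simp add: emb_minus)
  have "\<theta> j - emb (c j) \<noteq> 0"
    using \<theta>_neq_c by simp
  moreover have "y - emb (c j) \<noteq> 0"
    using quadratic_pair_irrational[OF assms \<theta>_irrational] emb_in_rational_fls by auto
  ultimately show ?thesis
    using quadratic_pair_inverse[OF pair] by (simp add: \<theta>_Suc)
qed

lemma quadratic_pair_\<theta>_unfold:
  assumes "quadratic_pair (\<theta> (Suc j)) y"
  shows "quadratic_pair (\<theta> j) (emb (c j) + inverse y)"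
proof -
  have "y \<noteq> 0"
    using quadratic_pair_irrational[OF assms \<theta>_irrational] emb_in_rational_fls[of 0] by auto
  then have "quadratic_pair (inverse (\<theta> (Suc j))) (inverse y)"
    using quadratic_pair_inverse[OF assms \<theta>_nonzero] by simp
  moreover have "inverse (\<theta> (Suc j)) + emb (c j) = \<theta> j"
    by (subst complete_quotient_unfold[of c \<alpha> j]) (rule add.commute)
  ultimately show ?thesis
    using quadratic_pair_add_emb[of _ _ "c j"] by (metis add.commute)
qed

lemma quadratic_\<theta>_iff: "quadratic (\<theta> j) \<longleftrightarrow> quadratic \<alpha>"
proof (induction j)
  case (Suc j)
  then show ?case
    using quadratic_pair_\<theta>_Suc quadratic_pair_\<theta>_unfold unfolding quadratic_def by blast
qed simp

lemma \<theta>_moebius: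
  assumes "1 \<le> m"
  shows "\<exists>P P' Q Q'. \<theta> m * (emb Q * \<theta> (m + Suc k) + emb Q') = emb P * \<theta> (m + Suc k) + emb P' \<and>
    P' \<noteq> 0 \<and> Q \<noteq> 0 \<and> degree P' < degree P \<and> degree Q' \<le> degree Q \<and>
    degree P = degree Q + degree (c m)"
proof (induction k)
  case 0
  have "\<theta> m * (emb 1 * \<theta> (m + 1) + emb 0) = emb (c m) * \<theta> (m + 1) + emb 1"
    using \<theta>_neq_c[of m] by (simp add: \<theta>_Suc field_simps)
  then show ?case
    using degree_c[OF assms] by (intro exI[of _ "c m"] exI[of _ 1] exI[of _ 1] exI[of _ 0]) simp
next
  case (Suc k)
  then obtain P P' Q Q'
    where eq: "\<theta> m * (emb Q * \<theta> (m + Suc k) + emb Q') = emb P * \<theta> (m + Suc k) + emb P'"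
    and nonzero: "P' \<noteq> 0" "Q \<noteq> 0"
    and deg: "degree P' < degree P" "degree Q' \<le> degree Q" "degree P = degree Q + degree (c m)"
    by blast
  define C y z where "C = c (m + Suc k)" and "y = \<theta> (m + Suc k)" and "z = \<theta> (m + Suc (Suc k))"
  have "z \<noteq> 0" using \<theta>_nonzero by (simp only: z_def) simp
  have y_eq: "y = emb C + inverse z"
    unfolding C_def y_def z_def by (simp add: \<theta>_Suc)
  have "(emb Q * y + emb Q') * z = emb (Q * C + Q') * z + emb Q"
    "(emb P * y + emb P') * z = emb (P * C + P') * z + emb P"
    unfolding y_eq using \<open>z \<noteq> 0\<close> by (simp_all add: emb_simps field_simps)
  with eq have "\<theta> m * (emb (Q * C + Q') * z + emb Q) = emb (P * C + P') * z + emb P"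
    unfolding y_def by (metis mult.assoc)
  moreover have "P \<noteq> 0" "1 \<le> degree C" "C \<noteq> 0"
    using deg(1) degree_c c_nonzero unfolding C_def by auto
  then have "degree (P * C + P') = degree P + degree C"
    "degree (Q * C + Q') = degree Q + degree C"
    using deg nonzero by (subst degree_add_eq_left; simp add: degree_mult_eq)+
  ultimately show ?case
    using nonzero deg \<open>1 \<le> degree C\<close> \<open>P \<noteq> 0\<close> unfolding z_def
    by (intro exI[of _ "P * C + P'"] exI[of _ P] exI[of _ "Q * C + Q'"] exI[of _ Q]) auto
qed

text \<open>Closing one period in \<open>\<theta>_moebius\<close> gives \<open>\<theta> (Q \<theta> + Q') = P \<theta> + P'\<close>, so
  \<open>\<theta> y = -P'/Q\<close> for the other root \<open>y\<close>; the degree bounds make \<open>|y| < 1\<close>.\<close>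

lemma \<theta>_purely_periodic_reduced:
  assumes "1 \<le> m" "1 \<le> s" and periodic: "\<theta> (m + s) = \<theta> m"
  obtains y where "quadratic_pair (\<theta> m) y" "0 < fls_subdegree y"
proof -
  have "m + Suc (s - 1) = m + s" using \<open>1 \<le> s\<close> by simp
  obtain P P' Q Q' where eq: "\<theta> m * (emb Q * \<theta> m + emb Q') = emb P * \<theta> m + emb P'"
    and nonzero: "P' \<noteq> 0" "Q \<noteq> 0"
    and deg: "degree P' < degree P" "degree P = degree Q + degree (c m)"
    using \<theta>_moebius[OF assms(1), of "s - 1"]
    unfolding \<open>m + Suc (s - 1) = m + s\<close> periodic by blast
  let ?y = "- emb (Q' - P) / emb Q - \<theta> m"
  have "emb Q * (\<theta> m)\<^sup>2 + emb (Q' - P) * \<theta> m + emb (- P') = 0"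
    using eq by (simp add: emb_simps algebra_simps power2_eq_square)
  then have pair: "quadratic_pair (\<theta> m) ?y"
    using nonzero by (intro quadratic_pair_other_root) auto
  have "?y = - emb P' / (emb Q * \<theta> m)"
    using eq nonzero \<theta>_nonzero[OF assms(1)] by (simp add: emb_simps field_simps)
  then have "fls_subdegree ?y = int (degree P) - int (degree P')"
    using nonzero \<theta>_nonzero[OF assms(1)] \<theta>_subdegree[OF assms(1)] deg(2)
    by (simp add: fls_divide_subdegree)
  with deg(1) pair show thesis using that by simp
qed

end

locale quadratic_cf_expansion = cf_expansion +
  assumes quadratic: "quadratic \<alpha>"
begin

abbreviation \<theta>' :: "nat \<Rightarrow> 'a fls" where
  "\<theta>' j \<equiv> galois_conj (\<theta> j)"

lemma quadratic_pair_\<theta>_\<theta>': "quadratic_pair (\<theta> j) (\<theta>' j)"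
  using quadratic quadratic_\<theta>_iff[of j] galois_conj_eqI[OF \<theta>_irrational]
  unfolding quadratic_def by metis

lemma \<theta>'_nonzero: "\<theta>' j \<noteq> 0"
proof -
  have "\<theta>' j \<notin> rational_fls"
    by (rule quadratic_pair_irrational[OF quadratic_pair_\<theta>_\<theta>' \<theta>_irrational])
  moreover have "0 \<in> rational_fls"
    using emb_in_rational_fls[of 0] by simp
  ultimately show ?thesis by auto
qed

lemma \<theta>'_unfold: "\<theta>' j = emb (c j) + inverse (\<theta>' (Suc j))"
  using galois_conj_eqI[OF \<theta>_irrational quadratic_pair_\<theta>_unfold[OF quadratic_pair_\<theta>_\<theta>']] .

lemma \<theta>'_Suc: "\<theta>' (Suc j) = inverse (\<theta>' j - emb (c j))"
  by (subst \<theta>'_unfold[of j]) simp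

lemma \<theta>'_subdegree_Suc:
  assumes "1 \<le> j" "0 < fls_subdegree (\<theta>' j)"
  shows "fls_subdegree (\<theta>' (Suc j)) = int (degree (c j))"
proof -
  have "- int (degree (c j)) < fls_subdegree (\<theta>' j)"
    using assms by simp
  then have "emb (- c j) + \<theta>' j \<noteq> 0" "fls_subdegree (emb (- c j) + \<theta>' j) = - int (degree (c j))"
    using emb_add_small[of "- c j"] c_nonzero[OF assms(1)] by simp_all
  then show ?thesis
    by (simp add: \<theta>'_Suc emb_minus)
qed

lemma \<theta>'_subdegree_pos:
  assumes "1 \<le> m" "0 < fls_subdegree (\<theta>' m)" "m \<le> j"
  shows "0 < fls_subdegree (\<theta>' j)"
  using assms(3)
proof (induction j rule: dec_induct)
  case (step j)
  then show ?case
    using \<theta>'_subdegree_Suc[of j] degree_c[of j] assms(1) by simp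
qed (fact assms(2))

lemma \<theta>'_subdegree_unfold:
  assumes "1 \<le> j" "fls_subdegree (\<theta>' (Suc j)) \<le> 0"
  shows "fls_subdegree (\<theta>' j) = - int (degree (c j))"
proof -
  have "- int (degree (c j)) < fls_subdegree (inverse (\<theta>' (Suc j)))"
    using assms degree_c[of j] by simp
  then show ?thesis
    using emb_add_small(2)[OF c_nonzero[OF assms(1)]] \<theta>'_unfold[of j] by simp
qed

lemma \<theta>'_subdegree_nonpos:
  assumes "1 \<le> j" "j \<le> n" "fls_subdegree (\<theta>' n) \<le> 0"
  shows "fls_subdegree (\<theta>' j) \<le> 0"
  using assms(2,1)
proof (induction j rule: inc_induct)
  case (step j)
  then show ?case
    using \<theta>'_subdegree_unfold[of j] by simp
qed (use assms(3) in simp)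

lemma \<theta>'_subdegree_below:
  assumes "1 \<le> j" "j < n" "fls_subdegree (\<theta>' n) \<le> 0"
  shows "fls_subdegree (\<theta>' j) = - int (degree (c j))"
  using \<theta>'_subdegree_unfold[OF assms(1)] \<theta>'_subdegree_nonpos[of "Suc j" n] assms by simp

lemma \<theta>_diff_\<theta>'_subdegree:
  assumes "\<theta> n \<noteq> \<theta>' n" "j \<le> n"
  shows "\<theta> j \<noteq> \<theta>' j \<and> fls_subdegree (\<theta> j - \<theta>' j) =
    fls_subdegree (\<theta> n - \<theta>' n) - (\<Sum>i = Suc j..n. fls_subdegree (\<theta> i) + fls_subdegree (\<theta>' i))"
  using assms(2)
proof (induction j rule: inc_induct)
  case (step j)
  have nonzero: "\<theta> (Suc j) \<noteq> 0" "\<theta>' (Suc j) \<noteq> 0"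
    using \<theta>_nonzero \<theta>'_nonzero by simp_all
  have "\<theta> j - \<theta>' j = inverse (\<theta> (Suc j)) - inverse (\<theta>' (Suc j))"
    by (subst \<theta>'_unfold[of j], subst complete_quotient_unfold[of c \<alpha> j]) simp
  also have "\<dots> = - (inverse (\<theta> (Suc j)) * (\<theta> (Suc j) - \<theta>' (Suc j)) * inverse (\<theta>' (Suc j)))"
    using inverse_diff_inverse[OF nonzero] .
  finally have diff: "\<theta> j - \<theta>' j = \<dots>" .
  have "\<theta> j - \<theta>' j \<noteq> 0"
    unfolding diff using nonzero step.IH by simp
  moreover have "(\<Sum>i = Suc j..n. fls_subdegree (\<theta> i) + fls_subdegree (\<theta>' i)) =
      fls_subdegree (\<theta> (Suc j)) + fls_subdegree (\<theta>' (Suc j)) +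
      (\<Sum>i = Suc (Suc j)..n. fls_subdegree (\<theta> i) + fls_subdegree (\<theta>' i))"
    using step.hyps by (subst sum.atLeast_Suc_atMost) simp_all
  then have "fls_subdegree (\<theta> j - \<theta>' j) = fls_subdegree (\<theta> n - \<theta>' n) -
      (\<Sum>i = Suc j..n. fls_subdegree (\<theta> i) + fls_subdegree (\<theta>' i))"
    unfolding diff using nonzero step.IH by simp
  ultimately show ?case by simp
qed (use assms(1) in simp)

end

lemma (in quadratic_cf_expansion) \<theta>'_subdegree_eventually_periodic:
  assumes "1 \<le> r" "1 \<le> s" and period: "\<theta> (r + 1 + s) = \<theta> (r + 1)"
    and reduced: "0 < fls_subdegree (\<theta>' (r + 1))" and "c r \<noteq> c (r + s)"
  shows "fls_subdegree (\<theta>' (r + 1)) = int (degree (c (r + s)))"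
    "fls_subdegree (\<theta>' r) = - int (degree (c r - c (r + s)))"
proof -
  have pos: "0 < fls_subdegree (\<theta>' j)" if "r + 1 \<le> j" for j
    using \<theta>'_subdegree_pos[of "r + 1"] reduced that by simp
  then show "fls_subdegree (\<theta>' (r + 1)) = int (degree (c (r + s)))"
    using \<theta>'_subdegree_Suc[of "r + s"] pos[of "r + s"] period assms(1,2) by simp
  have "\<theta>' (r + 1) = inverse (\<theta>' (r + s) - emb (c (r + s)))"
    using \<theta>'_Suc[of "r + s"] period by simp
  then have "\<theta>' r = emb (c r - c (r + s)) + \<theta>' (r + s)"
    using \<theta>'_unfold[of r] by (simp add: emb_diff)
  moreover have "0 < fls_subdegree (\<theta>' (r + s))"
    using pos assms(2) by simp
  ultimately show "fls_subdegree (\<theta>' r) = - int (degree (c r - c (r + s)))"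
    using emb_add_small(2)[of "c r - c (r + s)"] assms(5) by simp
qed

theorem (in cf_expansion) eventually_periodic_conj_subdegree:
  assumes "1 \<le> r" "1 \<le> s" and periodic: "\<And>i. r < i \<Longrightarrow> c (i + s) = c i"
    and "c r \<noteq> c (r + s)"
  shows "\<alpha> \<noteq> galois_conj \<alpha>"
    "fls_subdegree (\<alpha> - galois_conj \<alpha>) = 2 * (\<Sum>i = 1..r. int (degree (c i))) - int (degree (c r))
      - int (degree (c (r + s))) + int (degree (c r - c (r + s)))"
proof -
  have \<theta>_period: "\<theta> (r + 1 + s) = \<theta> (r + 1)"
    using periodic by (intro \<theta>_periodic) auto
  obtain y where pair: "quadratic_pair (\<theta> (r + 1)) y" and "0 < fls_subdegree y"
    using \<theta>_purely_periodic_reduced[of "r + 1" s] \<theta>_period assms(2) by auto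
  then have "quadratic \<alpha>"
    using quadratic_\<theta>_iff[of "r + 1"] unfolding quadratic_def by blast
  then interpret quadratic_cf_expansion c \<alpha>
    by (intro quadratic_cf_expansion.intro cf_expansion_axioms quadratic_cf_expansion_axioms.intro)
  have reduced: "0 < fls_subdegree (\<theta>' (r + 1))"
    using galois_conj_eqI[OF \<theta>_irrational pair] \<open>0 < fls_subdegree y\<close> by simp
  note \<theta>'_subdegree = \<theta>'_subdegree_eventually_periodic[OF assms(1,2) \<theta>_period reduced assms(4)]
  have gap: "\<theta> (r + 1) \<noteq> \<theta>' (r + 1)"
    "fls_subdegree (\<theta> (r + 1) - \<theta>' (r + 1)) = - int (degree (c (r + 1)))"
    using fls_add_dominant[of "\<theta> (r + 1)" "- \<theta>' (r + 1)"] \<theta>_nonzero[of "r + 1"]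
      \<theta>_subdegree[of "r + 1"] reduced by auto
  obtain r' where r': "r = Suc r'" using assms(1) by (cases r) auto
  have sum: "(\<Sum>i = 1..r + 1. fls_subdegree (\<theta> i) + fls_subdegree (\<theta>' i)) =
      - (\<Sum>i = 1..r + 1. int (degree (c i))) - (\<Sum>i = 1..r'. int (degree (c i)))
      - int (degree (c r - c (r + s))) + int (degree (c (r + s)))"
    using \<theta>_subdegree \<theta>'_subdegree_below[of _ r] \<theta>'_subdegree
    by (simp add: sum.distrib sum_negf sum_distrib_left r')
  have split_sum: "(\<Sum>i = 1..r + 1. int (degree (c i))) =
      (\<Sum>i = 1..r'. int (degree (c i))) + int (degree (c r)) + int (degree (c (r + 1)))"
    "(\<Sum>i = 1..r. int (degree (c i))) = (\<Sum>i = 1..r'. int (degree (c i))) + int (degree (c r))"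
    by (simp_all add: r')
  have "\<alpha> \<noteq> galois_conj \<alpha> \<and> fls_subdegree (\<alpha> - galois_conj \<alpha>) =
      - int (degree (c (r + 1))) - (\<Sum>i = 1..r + 1. fls_subdegree (\<theta> i) + fls_subdegree (\<theta>' i))"
    using \<theta>_diff_\<theta>'_subdegree[OF gap(1) le0]
    unfolding gap(2)[unfolded One_nat_def] complete_quotient.simps(1) One_nat_def .
  then show "\<alpha> \<noteq> galois_conj \<alpha>"
    "fls_subdegree (\<alpha> - galois_conj \<alpha>) = 2 * (\<Sum>i = 1..r. int (degree (c i))) - int (degree (c r))
      - int (degree (c (r + s))) + int (degree (c r - c (r + s)))"
    using sum split_sum by linarith+
qed

lemma eperiodic_pq_preperiod: "n \<le> r \<Longrightarrow> eperiodic_pq a r b s n = a n"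
  by (simp add: eperiodic_pq_def)

lemma eperiodic_pq_periodic:
  assumes "r < n"
  shows "eperiodic_pq a r b s (n + s) = eperiodic_pq a r b s n"
proof -
  have "n + s - Suc r = (n - Suc r) + s"
    using assms by simp
  then have "(n + s - Suc r) mod s = (n - Suc r) mod s"
    by simp
  then show ?thesis
    using assms by (simp add: eperiodic_pq_def)
qed

lemma eperiodic_pq_period_end:
  assumes "1 \<le> s"
  shows "eperiodic_pq a r b s (r + s) = b s"
proof -
  have "(r + s - r - 1) mod s + 1 = s"
    using assms by simp
  then show ?thesis
    using assms by (simp add: eperiodic_pq_def)
qed

lemma degree_eperiodic_pq:
  assumes "\<And>i. 1 \<le> i \<Longrightarrow> i \<le> r \<Longrightarrow> 1 \<le> degree (a i)"
    and "\<And>j. 1 \<le> j \<Longrightarrow> j \<le> s \<Longrightarrow> 1 \<le> degree (b j)"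
    and "1 \<le> s" "1 \<le> m"
  shows "1 \<le> degree (eperiodic_pq a r b s m)"
proof (cases "m \<le> r")
  case False
  have "(m - r - 1) mod s + 1 \<le> s"
    using \<open>1 \<le> s\<close> by (simp add: Suc_leI)
  then show ?thesis
    using False assms(2) by (simp add: eperiodic_pq_def)
qed (use assms in \<open>simp add: eperiodic_pq_def\<close>)

lemma inverse_fls_absv:
  fixes f :: "'a::{field,finite} fls"
  assumes "f \<noteq> 0"
  shows "inverse (fls_absv f) = real CARD('a) powi fls_subdegree f"
  using assms by (simp add: fls_absv_def powr_minus powr_real_of_int')

theorem lemma2p2:
  fixes a b :: "nat \<Rightarrow> ('q::{field,finite}) poly" and r s :: nat and \<alpha> :: "'q fls"
  assumes "r \<ge> 1" and "s \<ge> 1"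
    and "\<And>i. 1 \<le> i \<Longrightarrow> i \<le> r \<Longrightarrow> degree (a i) \<ge> 1"
    and "\<And>j. 1 \<le> j \<Longrightarrow> j \<le> s \<Longrightarrow> degree (b j) \<ge> 1"
    and "cf_convergent (eperiodic_pq a r b s) \<longlonglongrightarrow> \<alpha>"
    and "a r \<noteq> b s"
  shows "inverse (fls_absv (\<alpha> - galois_conj \<alpha>)) =
           real CARD('q) powi
             (2 * (\<Sum>i=1..r. int (degree (a i))) - int (degree (a r)) - int (degree (b s))
              + int (degree (a r - b s)))"
proof -
  let ?c = "eperiodic_pq a r b s"
  interpret cf_expansion ?c \<alpha>
    using degree_eperiodic_pq[OF assms(3,4,2)] assms(5) by unfold_locales
  have ends: "?c r = a r" "?c (r + s) = b s"
    by (simp_all add: eperiodic_pq_preperiod eperiodic_pq_period_end[OF assms(2)])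
  have "(\<Sum>i = 1..r. int (degree (?c i))) = (\<Sum>i = 1..r. int (degree (a i)))"
    by (simp add: eperiodic_pq_preperiod)
  then show ?thesis
    using eventually_periodic_conj_subdegree[OF assms(1,2) eperiodic_pq_periodic] assms(6)
    by (simp add: ends inverse_fls_absv)
qed

end
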